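(* Let $s>0$ and let $c$ be a constant. Suppose $g\in C^1[s,\infty)$ satisfies $$g'(t)=-g(t)\Big(1+\frac1t\Big)+\frac1t\int_s^t g(\xi)\,d\xi+\frac ct,\qquad t\in[s,\infty).$$ Then for all $t\ge s$, $$g(t)=g'(s)\,s^2\,e^{s}\,I_2(t,s)+g(s),$$ where $g'(s)=c\,s^{-1}-(1+s^{-1})\,g(s)$.
   Context: $I_2(t,s)=\int_s^t \frac{e^{-\xi}}{\xi^2}\,d\xi$. *)

theory Defs
  imports "HOL-Analysis.Analysis"
begin

definition I2 :: "real \<Rightarrow> real \<Rightarrow> real" where
  "I2 t s = integral {s..t} (\<lambda>\<xi>. exp (- \<xi>) / \<xi>^2)"

end

theory Submission
  imports Defs
begin

text \<open>Multiplying the equation by \<open>t\<close> gives \<open>t g'(t) = c - (t + 1) g(t) + \<integral>\<^sub>s\<^sup>t g\<close>,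
  whose right-hand side is differentiable although \<open>g'\<close> need not be. Its derivative is
  \<open>-(t + 1) g'(t)\<close>, i.e. \<open>-(1 + 1/t)\<close> times itself, so
  \<open>t e\<^sup>t\<close> times it is constant: \<open>t\<^sup>2 e\<^sup>t g'(t) = s\<^sup>2 e\<^sup>s g'(s)\<close>.
  Integrating \<open>g'(t) = g'(s) s\<^sup>2 e\<^sup>s e\<^sup>-\<^sup>t / t\<^sup>2\<close> from \<open>s\<close> to \<open>t\<close> gives the formula.\<close>

lemma has_real_derivative_weighted_integral_residual:
  fixes g g' :: "real \<Rightarrow> real"
  assumes deriv: "\<And>y. y \<in> {s..t} \<Longrightarrow> (g has_real_derivative g' y) (at y within {s..t})"
    and x: "x \<in> {s..t}"
  shows "((\<lambda>y. y * exp y * (c - (y + 1) * g y + integral {s..y} g)) has_real_derivative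
           (x + 1) * exp x * (c - (x + 1) * g x + integral {s..x} g - x * g' x))
         (at x within {s..t})"
proof -
  have "continuous_on {s..t} g"
    using deriv by (meson DERIV_continuous continuous_on_eq_continuous_within)
  then have dG: "((\<lambda>y. integral {s..y} g) has_real_derivative g x) (at x within {s..t})"
    using x by (rule integral_has_real_derivative)
  have "((\<lambda>y. y * exp y * (c - (y + 1) * g y + integral {s..y} g)) has_real_derivative
           (1 * exp x + x * exp x) * (c - (x + 1) * g x + integral {s..x} g)
           + x * exp x * (- (1 * g x + (x + 1) * g' x) + g x)) (at x within {s..t})"
    by (intro derivative_eq_intros; (rule deriv[OF x] dG)?) auto
  then show ?thesis
    by (rule DERIV_cong) (simp add: algebra_simps)
qed

lemma integro_ode_first_integral:
  fixes g g' :: "real \<Rightarrow> real"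
  assumes s_pos: "s > 0"
    and deriv: "\<And>t. t \<ge> s \<Longrightarrow> (g has_real_derivative g' t) (at t within {s..})"
    and ode: "\<And>t. t \<ge> s \<Longrightarrow>
       g' t = - g t * (1 + 1 / t) + (1 / t) * integral {s..t} g + c / t"
    and "s \<le> t"
  shows "t^2 * exp t * g' t = s^2 * exp s * g' s"
proof -
  define h where "h y = y * exp y * (c - (y + 1) * g y + integral {s..y} g)" for y
  have residual: "y * g' y = c - (y + 1) * g y + integral {s..y} g" if "s \<le> y" for y
    using ode[OF that] that s_pos by (simp add: field_simps)
  have h_eq: "h y = y^2 * exp y * g' y" if "s \<le> y" for y
    unfolding h_def residual[OF that, symmetric] by (simp add: power2_eq_square)
  have deriv_st: "(g has_real_derivative g' y) (at y within {s..t})" if "y \<in> {s..t}" for y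
    using that by (auto intro: has_field_derivative_subset[OF deriv])
  have "(h has_real_derivative 0) (at x within {s..t})" if "x \<in> {s..t}" for x
  proof -
    have "(h has_real_derivative
            (x + 1) * exp x * (c - (x + 1) * g x + integral {s..x} g - x * g' x))
          (at x within {s..t})"
      unfolding h_def[abs_def] using deriv_st that
      by (rule has_real_derivative_weighted_integral_residual)
    then show ?thesis
      by (rule DERIV_cong) (use that residual[of x] in simp)
  qed
  then obtain k where "\<forall>x\<in>{s..t}. h x = k"
    using has_field_derivative_zero_constant[of "{s..t}" h] by auto
  then have "h t = h s"
    using \<open>s \<le> t\<close> by auto
  then show ?thesis
    using h_eq[OF \<open>s \<le> t\<close>] h_eq[OF order_refl] by simp
qed

theorem lemma3:
  fixes g g' :: "real \<Rightarrow> real" and s c :: real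
  assumes s_pos: "s > 0"
    and deriv: "\<And>t. t \<ge> s \<Longrightarrow> (g has_real_derivative g' t) (at t within {s..})"
    and cont_deriv: "continuous_on {s..} g'"
    and ode: "\<And>t. t \<ge> s \<Longrightarrow>
       g' t = - g t * (1 + 1 / t) + (1 / t) * integral {s..t} g + c / t"
  shows "(\<forall>t\<ge>s. g t = g' s * s^2 * exp s * I2 t s + g s)
         \<and> g' s = c / s - (1 + 1 / s) * g s"
proof -
  have "g t = g' s * s^2 * exp s * I2 t s + g s" if "s \<le> t" for t
  proof -
    \<comment> \<open>The gauge integral needs no continuity of \<open>g'\<close>.\<close>
    have "(g' has_integral g t - g s) {s..t}"
      using that
      by (intro fundamental_theorem_of_calculus)
         (auto simp: has_real_derivative_iff_has_vector_derivative[symmetric]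
               intro: has_field_derivative_subset[OF deriv])
    moreover have "g' x = g' s * s^2 * exp s * (exp (- x) / x^2)" if "x \<in> {s..t}" for x
      using integro_ode_first_integral[OF s_pos deriv ode, of x] that s_pos
      by (auto simp: field_simps exp_minus)
    ultimately have "((\<lambda>x. g' s * s^2 * exp s * (exp (- x) / x^2)) has_integral g t - g s) {s..t}"
      by (rule has_integral_eq[rotated])
    then have "integral {s..t} (\<lambda>x. g' s * s^2 * exp s * (exp (- x) / x^2)) = g t - g s"
      by (rule integral_unique)
    then show ?thesis
      unfolding I2_def by (simp only: integral_mult_right)
  qed
  moreover have "g' s = c / s - (1 + 1 / s) * g s"
    using ode[of s] by (simp add: algebra_simps)
  ultimately show ?thesis
    by blast
qed

end
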